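(* Let $k\ge 1$ and let $P_{4k}$ be the path with vertices labeled $1,2,\dots,4k$ consecutively along the path. For $v\in\{1,\dots,4k\}$, $$TDV(v)=\begin{cases}0 & \text{if } v\equiv 0,1 \pmod 4,\\ 1 & \text{if } v\equiv 2,3 \pmod 4.\end{cases}$$
   Context: A set $D \subseteq V(G)$ is a total dominating set of a graph $G$ if every vertex of $G$ has a neighbor in $D$. $\gamma_t(G)$ is the minimum cardinality of a total dominating set; a minimum one is a $\gamma_t(G)$-set. $TDV(v)$ is the number of $\gamma_t(P_{4k})$-sets containing $v$. *)

theory Defs
  imports Main
begin

text \<open>A graph is given by a vertex set V and a symmetric adjacency relation E.\<close>

definition total_dominating :: "'a set \<Rightarrow> ('a \<Rightarrow> 'a \<Rightarrow> bool) \<Rightarrow> 'a set \<Rightarrow> bool" where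
  "total_dominating V E D \<longleftrightarrow> D \<subseteq> V \<and> (\<forall>v\<in>V. \<exists>u\<in>D. E v u)"

definition gamma_t :: "'a set \<Rightarrow> ('a \<Rightarrow> 'a \<Rightarrow> bool) \<Rightarrow> nat" where
  "gamma_t V E = (LEAST n. \<exists>D. total_dominating V E D \<and> finite D \<and> card D = n)"

definition gamma_t_sets :: "'a set \<Rightarrow> ('a \<Rightarrow> 'a \<Rightarrow> bool) \<Rightarrow> 'a set set" where
  "gamma_t_sets V E = {D. total_dominating V E D \<and> finite D \<and> card D = gamma_t V E}"

definition path_V :: "nat \<Rightarrow> nat set" where
  "path_V n = {1..n}"

definition path_E :: "nat \<Rightarrow> nat \<Rightarrow> bool" where
  "path_E u v \<longleftrightarrow> u = v + 1 \<or> v = u + 1"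

definition TDV :: "nat \<Rightarrow> nat \<Rightarrow> nat" where
  "TDV k v = card {D \<in> gamma_t_sets (path_V (4*k)) path_E. v \<in> D}"

end

theory Submission
  imports Defs
begin

text \<open>The vertices \<open>4i+2, 4i+3\<close> of \<open>P\<^sub>4\<^sub>k\<close> have pairwise disjoint open neighbourhoods, so
  choosing a dominator for each of them is injective and every total dominating set has at least
  \<open>2k\<close> vertices; these vertices themselves form a total dominating set. If \<open>|D| = 2k\<close>, each of them
  has exactly one neighbour in \<open>D\<close>; since vertex 1 forces \<open>2 \<in> D\<close>, this propagates to
  \<open>4i+2 \<in> D\<close> for all \<open>i\<close>, and symmetrically from vertex \<open>4k\<close> to \<open>4i+3 \<in> D\<close>. Hence
  \<open>{v. v mod 4 \<in> {2,3}}\<close> is the unique minimum total dominating set.\<close>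

definition open_packing :: "'a set \<Rightarrow> ('a \<Rightarrow> 'a \<Rightarrow> bool) \<Rightarrow> 'a set \<Rightarrow> bool" where
  "open_packing V E P \<longleftrightarrow> P \<subseteq> V \<and> (\<forall>p\<in>P. \<forall>q\<in>P. \<forall>u. E p u \<longrightarrow> E q u \<longrightarrow> p = q)"

lemma open_packing_dominator_map:
  assumes td: "total_dominating V E D" and op: "open_packing V E P"
  obtains f where "inj_on f P" "f ` P \<subseteq> D" "\<And>p. p \<in> P \<Longrightarrow> E p (f p)"
proof -
  have "\<forall>p\<in>P. \<exists>u\<in>D. E p u"
    using td op by (auto simp: total_dominating_def open_packing_def)
  then obtain f where f: "\<And>p. p \<in> P \<Longrightarrow> f p \<in> D \<and> E p (f p)" by metis
  have "inj_on f P"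
  proof (rule inj_onI)
    fix p q assume "p \<in> P" "q \<in> P" "f p = f q"
    then show "p = q" using f[of p] f[of q] op unfolding open_packing_def by metis
  qed
  with f show thesis using that by blast
qed

lemma card_open_packing_le:
  assumes "total_dominating V E D" "finite D" "open_packing V E P"
  shows "card P \<le> card D"
  using assms by (metis open_packing_dominator_map card_inj_on_le)

lemma open_packing_unique_neighbour:
  assumes td: "total_dominating V E D" and fin: "finite D" "finite P"
    and op: "open_packing V E P" and eq: "card D = card P"
    and p: "p \<in> P" and u: "u \<in> D" "E p u" and w: "w \<in> D" "E p w"
  shows "u = w"
proof -
  obtain f where inj: "inj_on f P" and img: "f ` P \<subseteq> D" and nb: "\<And>p. p \<in> P \<Longrightarrow> E p (f p)"
    using open_packing_dominator_map[OF td op] by blast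
  have onto: "f ` P = D"
    using card_subset_eq[OF fin(1) img] card_image[OF inj] eq by simp
  have "x = f p" if x: "x \<in> D" "E p x" for x
  proof -
    obtain q where q: "q \<in> P" "x = f q" using onto x(1) by blast
    have "q = p" using op p q nb[OF q(1)] x(2) by (auto simp: open_packing_def)
    with q show ?thesis by simp
  qed
  with u w show ?thesis by metis
qed

lemma gamma_t_eq_card:
  assumes "total_dominating V E D\<^sub>0" "finite D\<^sub>0"
    and "\<And>D. total_dominating V E D \<Longrightarrow> finite D \<Longrightarrow> card D\<^sub>0 \<le> card D"
  shows "gamma_t V E = card D\<^sub>0"
  unfolding gamma_t_def by (rule Least_equality) (use assms in auto)

text \<open>At \<open>v = 1\<close> the truncated \<open>v - 1 = 0\<close> is harmless, since \<open>0 \<notin> D\<close>.\<close>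

lemma path_total_dominating_iff:
  "total_dominating (path_V n) path_E D \<longleftrightarrow>
     D \<subseteq> {1..n} \<and> (\<forall>v\<in>{1..n}. v - 1 \<in> D \<or> v + 1 \<in> D)"
proof -
  have "path_E v u \<longleftrightarrow> u = v - 1 \<or> u = v + 1" if "v \<ge> 1" for u v
    using that by (auto simp: path_E_def)
  moreover have "0 \<notin> D" if "D \<subseteq> {1..n}" using that by auto
  ultimately show ?thesis
    unfolding total_dominating_def path_V_def by (metis (no_types, lifting) atLeastAtMost_iff)
qed

definition middle_pairs :: "nat \<Rightarrow> nat set" where
  "middle_pairs k = {v \<in> {1..4*k}. v mod 4 = 2 \<or> v mod 4 = 3}"

lemma finite_middle_pairs: "finite (middle_pairs k)"
  by (simp add: middle_pairs_def)

lemma mem_middle_pairs_iff: "v \<in> middle_pairs k \<longleftrightarrow> (\<exists>i<k. v = 4*i + 2 \<or> v = 4*i + 3)"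
proof
  assume v: "v \<in> middle_pairs k"
  then have r: "v mod 4 = 2 \<or> v mod 4 = 3" and "v \<le> 4*k" by (auto simp: middle_pairs_def)
  have "v = 4*(v div 4) + v mod 4" by simp
  with r \<open>v \<le> 4*k\<close> have "v div 4 < k" "v = 4*(v div 4) + 2 \<or> v = 4*(v div 4) + 3" by linarith+
  then show "\<exists>i<k. v = 4*i + 2 \<or> v = 4*i + 3" by blast
next
  assume "\<exists>i<k. v = 4*i + 2 \<or> v = 4*i + 3"
  then show "v \<in> middle_pairs k" by (auto simp: middle_pairs_def mod_Suc)
qed

lemma middle_pairs_total_dominating: "total_dominating (path_V (4*k)) path_E (middle_pairs k)"
proof -
  have "v - 1 \<in> middle_pairs k \<or> v + 1 \<in> middle_pairs k" if v: "1 \<le> v" "v \<le> 4*k" for v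
  proof -
    define q r where "q = (v - 1) div 4" and "r = (v - 1) mod 4"
    have "v - 1 < k * 4" using v by linarith
    then have "q < k" unfolding q_def by (rule less_mult_imp_div_less)
    have v_eq: "v = 4*q + r + 1" using v(1) unfolding q_def r_def by simp
    have "r < 4" by (simp add: r_def)
    then consider "r = 0" | "r = 1" | "r = 2" | "r = 3" by linarith
    then show ?thesis
      using v_eq \<open>q < k\<close> unfolding mem_middle_pairs_iff by cases auto
  qed
  then show ?thesis
    unfolding path_total_dominating_iff by (auto simp: middle_pairs_def)
qed

lemma middle_pairs_open_packing: "open_packing (path_V (4*k)) path_E (middle_pairs k)"
proof -
  have not_shift: "(x + 2) mod 4 \<noteq> 2 \<and> (x + 2) mod 4 \<noteq> 3"
    if "x mod 4 = 2 \<or> x mod 4 = 3" for x :: nat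
    using that by (auto simp: mod_Suc)
  have "p = q"
    if "p mod 4 = 2 \<or> p mod 4 = 3" "q mod 4 = 2 \<or> q mod 4 = 3" "path_E p u" "path_E q u"
    for p q u :: nat
  proof -
    have "p = q \<or> p = q + 2 \<or> q = p + 2" using that(3,4) by (auto simp: path_E_def)
    then show ?thesis using not_shift that(1,2) by blast
  qed
  then show ?thesis
    unfolding open_packing_def middle_pairs_def path_V_def by blast
qed

lemma middle_pairs_subset_if_tight:
  assumes td: "total_dominating (path_V (4*k)) path_E D" and fin: "finite D"
    and tight: "card D = card (middle_pairs k)"
  shows "middle_pairs k \<subseteq> D"
proof -
  have sub: "D \<subseteq> {1..4*k}" and dom: "\<And>v. 1 \<le> v \<Longrightarrow> v \<le> 4*k \<Longrightarrow> v - 1 \<in> D \<or> v + 1 \<in> D"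
    using td unfolding path_total_dominating_iff by auto
  have one_side: "p - 1 \<notin> D \<or> p + 1 \<notin> D" if p: "p \<in> middle_pairs k" for p
  proof (rule ccontr)
    assume "\<not> ?thesis"
    then have in_D: "p - 1 \<in> D" "p + 1 \<in> D" by auto
    have "p \<ge> 1" using p by (simp add: middle_pairs_def)
    then have "path_E p (p - 1)" "path_E p (p + 1)" by (auto simp: path_E_def)
    then have "p - 1 = p + 1"
      using open_packing_unique_neighbour[OF td fin finite_middle_pairs middle_pairs_open_packing
          tight p] in_D by blast
    then show False by simp
  qed
  have mp: "4*i + 2 \<in> middle_pairs k" "4*i + 3 \<in> middle_pairs k" if "i < k" for i
    using that unfolding mem_middle_pairs_iff by blast+
  have left: "4*i + 2 \<in> D" if "i < k" for i
    using that
  proof (induction i)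
    case 0
    then show ?case using dom[of 1] sub by auto
  next
    case (Suc i)
    then have "4*i + 2 \<in> D" by simp
    moreover have "i < k" using Suc.prems by simp
    ultimately have "4*i + 4 \<notin> D" using one_side[OF mp(2)[of i]] by (simp add: add.commute)
    moreover have "4*i + 5 \<le> 4*k" using Suc.prems by simp
    ultimately have "4*i + 6 \<in> D" using dom[of "4*i + 5"] by (simp add: add.commute)
    then show ?case by (simp add: add.commute)
  qed
  have right: "4*i + 3 \<in> D" if "i < k" for i
  proof -
    have "i \<le> k - 1" using that by simp
    then show ?thesis
    proof (induction i rule: inc_induct)
      case base
      have "4*k - 1 \<in> D" using dom[of "4*k"] sub that by force
      then show ?case using that by (simp add: algebra_simps)
    next
      case (step i)
      then have "4*i + 7 \<in> D" by (simp add: add.commute)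
      moreover have "Suc i < k" using step.hyps by simp
      ultimately have "4*i + 5 \<notin> D" using one_side[OF mp(1)[of "Suc i"]] by (simp add: algebra_simps)
      then show ?case using dom[of "4*i + 4"] step.hyps by (simp add: add.commute)
    qed
  qed
  show ?thesis
    using left right by (auto simp: mem_middle_pairs_iff)
qed

lemma gamma_t_sets_path: "gamma_t_sets (path_V (4*k)) path_E = {middle_pairs k}"
proof -
  have gamma: "gamma_t (path_V (4*k)) path_E = card (middle_pairs k)"
    by (rule gamma_t_eq_card[OF middle_pairs_total_dominating finite_middle_pairs])
      (use card_open_packing_le middle_pairs_open_packing in blast)
  have "D = middle_pairs k"
    if "total_dominating (path_V (4*k)) path_E D" "finite D" "card D = card (middle_pairs k)" for D
    using card_subset_eq[OF that(2) middle_pairs_subset_if_tight[OF that]] that(3) by simp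
  then show ?thesis
    unfolding gamma_t_sets_def gamma
    using middle_pairs_total_dominating finite_middle_pairs by blast
qed

theorem corollary5p2:
  fixes k v :: nat
  assumes "k \<ge> 1" and "v \<in> {1..4*k}"
  shows "TDV k v = (if v mod 4 = 0 \<or> v mod 4 = 1 then 0 else 1)"
proof -
  have "TDV k v = card {D \<in> {middle_pairs k}. v \<in> D}"
    unfolding TDV_def gamma_t_sets_path ..
  also have "\<dots> = (if v \<in> middle_pairs k then 1 else 0)"
    by (cases "v \<in> middle_pairs k") (simp_all add: Collect_conv_if)
  finally show ?thesis
    using assms(2) unfolding middle_pairs_def by auto
qed

end
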